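(* Let $b\ge2$ be an integer and let $(q,q_1;q',q_1')$ be one of the fifteen quadruples $(3,1;3,1)$, $(3,1;3,2)$, $(3,2;3,2)$, $(3,2;4,3)$, $(3,1;4,3)$, $(3,2;4,1)$, $(3,1;4,1)$, $(3,2;5,4)$, $(3,2;5,3)$, $(3,1;5,4)$, $(3,2;5,2)$, $(3,1;5,3)$, $(3,2;5,1)$, $(3,1;5,2)$, $(3,1;5,1)$. Consider the configuration $\langle b;q,q_1;q',q_1'\rangle$ of smooth rational curves: a central curve $E_0$ with $E_0^2=-b$; a curve $E_1$ with $E_1^2=-2$; a chain $E_2,\dots,E_k$ with $E_i^2=-n_i$ where $[n_2,\dots,n_k]=q/q_1$; and a chain $E_{k+1},\dots,E_l$ with $E_i^2=-n_i$ where $[n_{k+1},\dots,n_l]=q'/q_1'$; $E_0$ meets each of $E_1,E_2,E_{k+1}$ transversally once, consecutive curves in each chain meet once, and there are no other intersections. Let $a_0,\dots,a_l$ be the discrepancies, i.e. the unique solution of $\sum_ja_jE_j\cdot E_i=2+E_i^2$ for all $i$. If not all $a_i$ are $0$ (i.e. the corresponding log terminal singularity of type $T_m$, $O_m$, or $I_m$ is not canonical), then $a_0+a_1\ge1$.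
   Context: $[m_1,\dots,m_r]$ denotes the Hirzebruch–Jung continued fraction $m_1-1/(m_2-1/(\cdots-1/m_r))$ with $m_i\ge2$; explicitly $3/1=[3]$, $3/2=[2,2]$, $4/3=[2,2,2]$, $4/1=[4]$, $5/4=[2,2,2,2]$, $5/3=[2,3]$, $5/2=[3,2]$, $5/1=[5]$. These configurations are exactly the minimal resolution graphs of log terminal singularities of types $T_m$ (first three quadruples), $O_m$ (next four) and $I_m$ (last eight). *)

theory Defs
  imports Complex_Main
begin

fun hjcf :: "nat list \<Rightarrow> real" where
  "hjcf [] = 0"
| "hjcf [m] = real m"
| "hjcf (m # ms) = real m - 1 / hjcf ms"

definition is_hj :: "nat list \<Rightarrow> nat \<Rightarrow> nat \<Rightarrow> bool" where
  "is_hj ns q q1 \<longleftrightarrow> ns \<noteq> [] \<and> (\<forall>m\<in>set ns. m \<ge> 2) \<and> hjcf ns = real q / real q1"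

text \<open>Configuration <b; ns1; ns2>: curves indexed 0..l, with E_0 central, E_1 the (-2)-curve,
  E_2..E_k the first chain (k = length ns1 + 1), E_(k+1)..E_l the second chain.\<close>
definition conf_k :: "nat list \<Rightarrow> nat" where "conf_k ns1 = length ns1 + 1"
definition conf_l :: "nat list \<Rightarrow> nat list \<Rightarrow> nat" where
  "conf_l ns1 ns2 = length ns1 + 1 + length ns2"

definition conf_adj :: "nat list \<Rightarrow> nat list \<Rightarrow> nat \<Rightarrow> nat \<Rightarrow> bool" where
  "conf_adj ns1 ns2 i j \<longleftrightarrow>
     (let k = conf_k ns1; l = conf_l ns1 ns2;
          e = (\<lambda>x y. (x = 0 \<and> (y = 1 \<or> y = 2 \<or> y = k + 1))
                    \<or> (2 \<le> x \<and> x < k \<and> y = x + 1)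
                    \<or> (k + 1 \<le> x \<and> x < l \<and> y = x + 1))
      in e i j \<or> e j i)"

definition conf_self :: "nat \<Rightarrow> nat list \<Rightarrow> nat list \<Rightarrow> nat \<Rightarrow> int" where
  "conf_self b ns1 ns2 i =
     (let k = conf_k ns1 in
      if i = 0 then - int b
      else if i = 1 then -2
      else if i \<le> k then - int (ns1 ! (i - 2))
      else - int (ns2 ! (i - k - 1)))"

definition conf_mat :: "nat \<Rightarrow> nat list \<Rightarrow> nat list \<Rightarrow> nat \<Rightarrow> nat \<Rightarrow> int" where
  "conf_mat b ns1 ns2 i j =
     (if i = j then conf_self b ns1 ns2 i
      else if conf_adj ns1 ns2 i j then 1 else 0)"

definition quads :: "(nat \<times> nat \<times> nat \<times> nat) set" where
  "quads = {(3,1,3,1), (3,1,3,2), (3,2,3,2), (3,2,4,3), (3,1,4,3), (3,2,4,1), (3,1,4,1),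
            (3,2,5,4), (3,2,5,3), (3,1,5,4), (3,2,5,2), (3,1,5,3), (3,2,5,1), (3,1,5,2),
            (3,1,5,1)}"

end

theory Submission
  imports Defs
begin

text \<open>
  The discrepancy equations along a chain \<open>[n\<^sub>1, ..., n\<^sub>r] = q/q\<^sub>1\<close> attached to a curve
  with discrepancy \<open>x\<close> can be solved from the far end: the first curve of the chain has
  discrepancy \<open>1 + (x - 1) q\<^sub>1/q - 1/q\<close>. Since \<open>a\<^sub>1 = a\<^sub>0/2\<close>, the equation at \<open>E\<^sub>0\<close>
  becomes the linear equation
  \<open>a\<^sub>0 (b - 1/2 - q\<^sub>1/q - q\<^sub>1'/q') = b - (q\<^sub>1 + 1)/q - (q\<^sub>1' + 1)/q'\<close>,
  and \<open>a\<^sub>0 + a\<^sub>1 = 3a\<^sub>0/2 \<ge> 1\<close> reduces to \<open>b + 1 \<ge> (q\<^sub>1 + 3)/q + (q\<^sub>1' + 3)/q'\<close>.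
  This holds for all fifteen quadruples except when \<open>b = 2\<close> and both chains consist of
  \<open>(-2)\<close>-curves; there \<open>a\<^sub>0 = 0\<close>, and the zero propagates along the chains, so all
  discrepancies vanish.
\<close>

text \<open>The product of the values of all suffixes; for \<open>[n\<^sub>1, ..., n\<^sub>r] = q/q\<^sub>1\<close> in lowest
  terms it is the numerator \<open>q\<close>.\<close>

fun hjprod :: "nat list \<Rightarrow> real" where
  "hjprod [] = 1"
| "hjprod (m # ms) = hjcf (m # ms) * hjprod ms"

lemma hjcf_gt_1: "ns \<noteq> [] \<Longrightarrow> \<forall>m\<in>set ns. m \<ge> 2 \<Longrightarrow> hjcf ns > 1"
proof (induction ns rule: hjcf.induct)
  case (3 m n ns)
  then have "1 / hjcf (n # ns) < 1" by simp
  with "3.prems" show ?case by simp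
qed simp_all

lemma hjcf_Cons_bounds:
  assumes "ms \<noteq> []" "\<forall>m\<in>set ms. m \<ge> 2"
  shows "real m - 1 < hjcf (m # ms)" "hjcf (m # ms) < real m"
proof -
  from assms obtain n ns where ms: "ms = n # ns" by (cases ms) auto
  have "0 < 1 / hjcf ms" "1 / hjcf ms < 1" using hjcf_gt_1[OF assms] by simp_all
  then show "real m - 1 < hjcf (m # ms)" "hjcf (m # ms) < real m" by (simp_all add: ms)
qed

lemma nat_eq_if_in_same_unit_interval:
  assumes "real m - 1 < t" "t < real m" "real n - 1 < t" "t \<le> real n"
  shows "m = n"
proof -
  have "real m < real (Suc n)" "real n < real (Suc m)" using assms by simp_all
  then show ?thesis by linarith
qed

lemma hjcf_inj:
  assumes "xs \<noteq> []" "\<forall>x\<in>set xs. x \<ge> 2" "ys \<noteq> []" "\<forall>y\<in>set ys. y \<ge> 2"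
    and "hjcf xs = hjcf ys"
  shows "xs = ys"
  using assms
proof (induction xs arbitrary: ys rule: hjcf.induct)
  case 1
  then show ?case by simp
next
  case (2 x)
  show ?case
  proof (cases ys rule: hjcf.cases)
    case (3 y z zs)
    then have "real y - 1 < real x" "real x < real y"
      using "2.prems" hjcf_Cons_bounds[of "z # zs" y] by auto
    then show ?thesis using nat_eq_if_in_same_unit_interval[of y "real x" x] by simp
  qed (use "2.prems" in auto)
next
  case (3 x z zs)
  note bounds_x = hjcf_Cons_bounds[of "z # zs" x]
  show ?case
  proof (cases ys rule: hjcf.cases)
    case (2 y)
    then show ?thesis
      using "3.prems" bounds_x nat_eq_if_in_same_unit_interval[of x "real y" y]
      by (auto simp del: hjcf.simps(3))
  next
    case (3 y w ws)
    have "x = y"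
      using "3.prems" bounds_x hjcf_Cons_bounds[of "w # ws" y] \<open>ys = y # w # ws\<close>
        nat_eq_if_in_same_unit_interval[of x "hjcf ys" y]
      by (auto simp del: hjcf.simps(3))
    moreover have "z # zs = w # ws"
      using "3.prems" "3.IH"[of "w # ws"] \<open>ys = y # w # ws\<close> \<open>x = y\<close> by auto
    ultimately show ?thesis using \<open>ys = y # w # ws\<close> by simp
  qed (use "3.prems" in simp)
qed

lemma hjprod_pos: "\<forall>m\<in>set ns. m \<ge> 2 \<Longrightarrow> hjprod ns > 0"
proof (induction ns)
  case (Cons m ms)
  then show ?case using hjcf_gt_1[of "m # ms"] by simp
qed simp

lemma hjcf_hjprod_twos:
  "ns \<noteq> [] \<Longrightarrow> \<forall>m\<in>set ns. m = 2 \<Longrightarrow> 1 / hjcf ns + 1 / hjprod ns = 1"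
proof (induction ns rule: hjcf.induct)
  case (3 m n ns)
  define h where "h = hjcf (n # ns)"
  define P where "P = hjprod (n # ns)"
  have "h > 1" using hjcf_gt_1[of "n # ns"] "3.prems" by (simp add: h_def)
  moreover have "P > 0" using hjprod_pos[of "n # ns"] "3.prems" by (simp add: P_def)
  moreover have "1 / h + 1 / P = 1" using "3.IH" "3.prems" by (simp add: h_def P_def)
  ultimately have "1 / (2 - 1 / h) + 1 / ((2 - 1 / h) * P) = 1"
    by (simp add: divide_simps) (simp add: algebra_simps)
  moreover have "hjcf (m # n # ns) = 2 - 1 / h" "hjprod (m # n # ns) = (2 - 1 / h) * P"
    using "3.prems" by (simp_all add: h_def P_def)
  ultimately show ?case by (simp only:)
qed simp_all

text \<open>Discrepancy equations of a chain of curves with self-intersections \<open>-n\<^sub>i\<close>: \<open>c 0\<close> is the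
  discrepancy of the curve the chain meets, \<open>c 1, ..., c r\<close> those of the chain curves.\<close>

definition chain_eqs :: "nat list \<Rightarrow> (nat \<Rightarrow> real) \<Rightarrow> bool" where
  "chain_eqs ns c \<longleftrightarrow> (\<forall>p < length ns.
     c p - real (ns ! p) * c (Suc p) + (if Suc p < length ns then c (Suc (Suc p)) else 0)
       = 2 - real (ns ! p))"

lemma chain_eqs_Cons:
  "chain_eqs (n # ms) c \<longleftrightarrow>
     c 0 - real n * c 1 + (if ms = [] then 0 else c 2) = 2 - real n
     \<and> chain_eqs ms (\<lambda>p. c (Suc p))"
  by (auto simp: chain_eqs_def less_Suc_eq_0_disj numeral_2_eq_2)

lemma chain_eqs_first:
  assumes "chain_eqs ns c" "ns \<noteq> []" "\<forall>m\<in>set ns. m \<ge> 2"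
  shows "c 1 = 1 + (c 0 - 1) / hjcf ns - 1 / hjprod ns"
  using assms
proof (induction ns arbitrary: c)
  case (Cons n ms)
  show ?case
  proof (cases ms)
    case Nil
    then show ?thesis using Cons.prems by (simp add: chain_eqs_Cons field_simps)
  next
    case (Cons m ms')
    define h where "h = hjcf ms"
    define P where "P = hjprod ms"
    define H where "H = real n - 1 / h"
    have "h > 1" "P > 0"
      using hjcf_gt_1[of ms] hjprod_pos[of ms] Cons.prems \<open>ms = m # ms'\<close>
      by (auto simp: h_def P_def)
    then have "1 / h < 1" by simp
    then have "H > 1" using Cons.prems by (simp add: H_def)
    have "c 2 = 1 + (c 1 - 1) / h - 1 / P"
      using Cons.IH[of "\<lambda>p. c (Suc p)"] Cons.prems \<open>ms = m # ms'\<close>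
      by (simp add: chain_eqs_Cons numeral_2_eq_2 h_def P_def)
    moreover have "c 0 - real n * c 1 + c 2 = 2 - real n"
      using Cons.prems \<open>ms = m # ms'\<close> by (simp add: chain_eqs_Cons)
    ultimately have "H * (c 1 - 1) = c 0 - 1 - 1 / P"
      by (simp add: H_def algebra_simps diff_divide_distrib)
    then have "c 1 = 1 + (c 0 - 1) / H - 1 / (H * P)"
      using \<open>H > 1\<close> by (simp add: field_simps)
    moreover have "hjcf (n # ms) = H" "hjprod (n # ms) = H * P"
      using \<open>ms = m # ms'\<close> by (simp_all add: H_def h_def P_def)
    ultimately show ?thesis by (simp only:)
  qed
qed simp

lemma chain_eqs_twos_zero:
  assumes "chain_eqs ns c" "\<forall>m\<in>set ns. m = 2" "c 0 = 0" "p \<le> length ns"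
  shows "c p = 0"
  using assms
proof (induction ns arbitrary: c p)
  case (Cons n ms)
  have "c 1 = 0"
    using chain_eqs_first[OF Cons.prems(1)] hjcf_hjprod_twos[of "n # ms"] Cons.prems(2,3)
    by (simp add: algebra_simps)
  moreover have "c (Suc q) = 0" if "q \<le> length ms" for q
    using Cons.IH[of "\<lambda>p. c (Suc p)" q] Cons.prems \<open>c 1 = 0\<close> that
    by (simp add: chain_eqs_Cons)
  ultimately show ?case using Cons.prems(3,4) by (cases p) auto
qed simp

definition discrepancies :: "nat \<Rightarrow> nat list \<Rightarrow> nat list \<Rightarrow> (nat \<Rightarrow> real) \<Rightarrow> bool" where
  "discrepancies b ns1 ns2 a \<longleftrightarrow> (\<forall>i \<le> conf_l ns1 ns2.
     (\<Sum>j \<le> conf_l ns1 ns2. a j * real_of_int (conf_mat b ns1 ns2 j i))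
       = 2 + real_of_int (conf_mat b ns1 ns2 i i))"

lemma conf_row_sum:
  assumes "N \<subseteq> {..conf_l ns1 ns2}" "i \<notin> N"
    and "\<And>j. j \<le> conf_l ns1 ns2 \<Longrightarrow> j \<noteq> i \<Longrightarrow> conf_adj ns1 ns2 j i \<longleftrightarrow> j \<in> N"
    and "i \<le> conf_l ns1 ns2"
  shows "(\<Sum>j \<le> conf_l ns1 ns2. a j * real_of_int (conf_mat b ns1 ns2 j i))
           = real_of_int (conf_self b ns1 ns2 i) * a i + sum a N"
proof -
  let ?l = "conf_l ns1 ns2"
  have "(\<Sum>j \<le> ?l. a j * real_of_int (conf_mat b ns1 ns2 j i))
      = (\<Sum>j \<le> ?l. (if j = i then real_of_int (conf_self b ns1 ns2 i) * a i else 0)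
                     + (if j \<in> N then a j else 0))"
    using assms(2,3) by (intro sum.cong) (auto simp: conf_mat_def)
  also have "\<dots> = real_of_int (conf_self b ns1 ns2 i) * a i + sum a N"
    using assms(1,4) by (simp add: sum.distrib sum.inter_restrict[symmetric] Int_absorb1)
  finally show ?thesis .
qed

lemma discrepancies_at_1:
  assumes "discrepancies b ns1 ns2 a"
  shows "a 0 = 2 * a 1"
proof -
  have "(\<Sum>j \<le> conf_l ns1 ns2. a j * real_of_int (conf_mat b ns1 ns2 j 1)) = - 2 * a 1 + a 0"
    by (subst conf_row_sum[where N = "{0}"])
      (auto simp: conf_adj_def conf_k_def conf_l_def conf_self_def Let_def)
  with assms show ?thesis
    by (auto simp: discrepancies_def conf_l_def conf_mat_def conf_self_def dest: spec[of _ 1])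
qed

lemma discrepancies_at_0:
  assumes "discrepancies b ns1 ns2 a" "ns1 \<noteq> []" "ns2 \<noteq> []"
  shows "a 1 + a 2 + a (conf_k ns1 + 1) - real b * a 0 = 2 - real b"
proof -
  have "(\<Sum>j \<le> conf_l ns1 ns2. a j * real_of_int (conf_mat b ns1 ns2 j 0))
      = - real b * a 0 + (a 1 + a 2 + a (conf_k ns1 + 1))"
    using assms(2,3)
    by (subst conf_row_sum[where N = "{1, 2, conf_k ns1 + 1}"])
      (auto simp: conf_adj_def conf_k_def conf_l_def conf_self_def Let_def Suc_le_eq)
  with assms(1) show ?thesis
    by (auto simp: discrepancies_def conf_mat_def conf_self_def dest: spec[of _ 0])
qed

text \<open>The two chains are \<open>E\<^bsub>off+1\<^esub>, ..., E\<^bsub>off+r\<^esub>\<close> with \<open>off = 1\<close> and \<open>off = k\<close>.\<close>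

lemma discrepancies_chain:
  assumes "discrepancies b ns1 ns2 a" and chain: "(off, ns) \<in> {(1, ns1), (conf_k ns1, ns2)}"
  shows "chain_eqs ns (\<lambda>p. if p = 0 then a 0 else a (off + p))"
proof -
  have "(if p = 0 then a 0 else a (off + p)) - real (ns ! p) * a (off + Suc p)
      + (if Suc p < length ns then a (off + Suc (Suc p)) else 0) = 2 - real (ns ! p)"
    if p: "p < length ns" for p
  proof -
    let ?i = "off + Suc p"
    let ?N = "{if p = 0 then 0 else off + p} \<union> (if Suc p < length ns then {Suc ?i} else {})"
    have self: "conf_self b ns1 ns2 ?i = - int (ns ! p)"
      using p chain by (auto simp: conf_self_def conf_k_def)
    have "?i \<le> conf_l ns1 ns2" using p chain by (auto simp: conf_l_def conf_k_def)
    then have "(\<Sum>j \<le> conf_l ns1 ns2. a j * real_of_int (conf_mat b ns1 ns2 j ?i))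
        = 2 - real (ns ! p)"
      using assms(1) self by (simp add: discrepancies_def conf_mat_def)
    moreover have "(\<Sum>j \<le> conf_l ns1 ns2. a j * real_of_int (conf_mat b ns1 ns2 j ?i))
        = - real (ns ! p) * a ?i + sum a ?N"
      using p chain self \<open>?i \<le> conf_l ns1 ns2\<close>
      by (subst conf_row_sum[where N = ?N]) (auto simp: conf_adj_def conf_k_def conf_l_def Let_def)
    moreover have "sum a ?N = (if p = 0 then a 0 else a (off + p))
                           + (if Suc p < length ns then a (Suc ?i) else 0)"
      using chain by auto
    ultimately show ?thesis by simp
  qed
  then show ?thesis
    unfolding chain_eqs_def by (intro allI impI) (simp only: nat.distinct if_False add_Suc_right)
qed

lemma discrepancies_central_equation:
  assumes "discrepancies b ns1 ns2 a"
    and "ns1 \<noteq> []" "\<forall>m\<in>set ns1. m \<ge> 2" "ns2 \<noteq> []" "\<forall>m\<in>set ns2. m \<ge> 2"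
  shows "a 0 * (real b - 1/2 - 1 / hjcf ns1 - 1 / hjcf ns2)
           = real b - 1 / hjcf ns1 - 1 / hjprod ns1 - 1 / hjcf ns2 - 1 / hjprod ns2"
proof -
  have "a 2 = 1 + (a 0 - 1) / hjcf ns1 - 1 / hjprod ns1"
    using chain_eqs_first[OF discrepancies_chain[OF assms(1), of 1 ns1] assms(2,3)]
    by (simp add: numeral_2_eq_2)
  moreover have "a (conf_k ns1 + 1) = 1 + (a 0 - 1) / hjcf ns2 - 1 / hjprod ns2"
    using chain_eqs_first[OF discrepancies_chain[OF assms(1), of "conf_k ns1" ns2] assms(4,5)]
    by simp
  ultimately show ?thesis
    using discrepancies_at_0[OF assms(1,2,4)] discrepancies_at_1[OF assms(1)]
    by (simp add: algebra_simps diff_divide_distrib)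
qed

lemma discrepancies_zero:
  assumes "discrepancies b ns1 ns2 a" "\<forall>m\<in>set ns1. m = 2" "\<forall>m\<in>set ns2. m = 2"
    and "a 0 = 0" "i \<le> conf_l ns1 ns2"
  shows "a i = 0"
proof (cases "i \<le> conf_k ns1")
  case True
  have "a 1 = 0" using discrepancies_at_1[OF assms(1)] \<open>a 0 = 0\<close> by simp
  consider "i \<le> 1" | "2 \<le> i" "i - 1 \<le> length ns1" using True by (force simp: conf_k_def)
  then show ?thesis
  proof cases
    case 1
    then show ?thesis using \<open>a 0 = 0\<close> \<open>a 1 = 0\<close> by (auto simp: le_Suc_eq)
  next
    case 2
    then show ?thesis
      using chain_eqs_twos_zero[OF discrepancies_chain[OF assms(1), of 1 ns1] assms(2), of "i - 1"]
        \<open>a 0 = 0\<close>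
      by simp
  qed
next
  case False
  then show ?thesis
    using chain_eqs_twos_zero[OF discrepancies_chain[OF assms(1), of "conf_k ns1" ns2] assms(3),
        of "i - conf_k ns1"] assms(4,5)
    by (auto simp: conf_k_def conf_l_def)
qed

lemma is_hj_unique: "is_hj ns q q1 \<Longrightarrow> is_hj ms q q1 \<Longrightarrow> ns = ms"
  unfolding is_hj_def by (metis hjcf_inj)

lemma is_hj_expansions:
  "is_hj [3] 3 1" "is_hj [2, 2] 3 2" "is_hj [4] 4 1" "is_hj [2, 2, 2] 4 3"
  "is_hj [5] 5 1" "is_hj [3, 2] 5 2" "is_hj [2, 3] 5 3" "is_hj [2, 2, 2, 2] 5 4"
  by (simp_all add: is_hj_def)

lemma is_hj_small:
  assumes "is_hj ns q q1" "(q, q1) \<in> {(3,1), (3,2), (4,1), (4,3), (5,1), (5,2), (5,3), (5,4)}"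
  shows "hjprod ns = q" and "q1 + 1 = q \<Longrightarrow> \<forall>m\<in>set ns. m = 2"
  using assms is_hj_expansions by (auto dest: is_hj_unique)

lemma quads_components:
  "(q, q1, q', q1') \<in> quads \<Longrightarrow>
     (q, q1) \<in> {(3,1), (3,2), (4,1), (4,3), (5,1), (5,2), (5,3), (5,4)} \<and>
     (q', q1') \<in> {(3,1), (3,2), (4,1), (4,3), (5,1), (5,2), (5,3), (5,4)}"
  by (auto simp: quads_def)

lemma quads_fractions_less:
  "(q, q1, q', q1') \<in> quads \<Longrightarrow> real q1 / q + real q1' / q' < 3/2"
  by (auto simp: quads_def)

lemma quads_two_thirds_or_canonical:
  assumes "(q, q1, q', q1') \<in> quads" "b \<ge> 2"
  shows "2 * (real b - 1/2 - real q1 / q - real q1' / q')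
           \<le> 3 * (real b - real q1 / q - 1 / q - real q1' / q' - 1 / q')
         \<or> b = 2 \<and> q1 + 1 = q \<and> q1' + 1 = q'"
proof -
  have "real b \<ge> 3 \<or> b = 2" using assms(2) by linarith
  then show ?thesis using assms(1) by (auto simp: quads_def)
qed

theorem proposition4p8:
  fixes b q q1 q' q1' :: nat and ns1 ns2 :: "nat list" and a :: "nat \<Rightarrow> real"
  assumes "b \<ge> 2"
    and "(q, q1, q', q1') \<in> quads"
    and "is_hj ns1 q q1" and "is_hj ns2 q' q1'"
    and "\<forall>i \<le> conf_l ns1 ns2.
           (\<Sum>j \<le> conf_l ns1 ns2. a j * real_of_int (conf_mat b ns1 ns2 j i))
             = 2 + real_of_int (conf_mat b ns1 ns2 i i)"
    and "\<exists>i \<le> conf_l ns1 ns2. a i \<noteq> 0"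
  shows "a 0 + a 1 \<ge> 1"
proof -
  have disc: "discrepancies b ns1 ns2 a" using assms(5) by (simp add: discrepancies_def)
  note chain1 = is_hj_small[OF assms(3) quads_components[OF assms(2), THEN conjunct1]]
  note chain2 = is_hj_small[OF assms(4) quads_components[OF assms(2), THEN conjunct2]]
  let ?D = "real b - 1/2 - real q1 / q - real q1' / q'"
  let ?N = "real b - real q1 / q - 1 / q - real q1' / q' - 1 / q'"
  have central: "a 0 * ?D = ?N"
    using discrepancies_central_equation[OF disc] assms(3,4) chain1(1) chain2(1)
    by (simp add: is_hj_def)
  have "?D > 0" using quads_fractions_less[OF assms(2)] assms(1) by linarith
  from quads_two_thirds_or_canonical[OF assms(2,1)] show ?thesis
  proof
    assume "2 * ?D \<le> 3 * ?N"
    then have "2/3 \<le> ?N / ?D" using \<open>?D > 0\<close> by (simp add: le_divide_eq)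
    also have "?N / ?D = a 0" using central \<open>?D > 0\<close> by (simp add: divide_eq_eq)
    finally show ?thesis using discrepancies_at_1[OF disc] by simp
  next
    assume canonical: "b = 2 \<and> q1 + 1 = q \<and> q1' + 1 = q'"
    then have "?N = 0" by (auto simp: field_simps)
    then have "a 0 = 0" using central \<open>?D > 0\<close> by simp
    then have "a i = 0" if "i \<le> conf_l ns1 ns2" for i
      using discrepancies_zero[OF disc chain1(2) chain2(2)] canonical that by simp
    with assms(6) show ?thesis by blast
  qed
qed

end
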